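(* Let $H$ be a graph such that $L(H)$ satisfies the Abu-Khzam–Langston property, i.e. for every positive integer $t$, $\chi(L(H))\geq t$ implies that $L(H)$ has a $K_t$-immersion. Then for every integer $m\geq 2$, $L(mH)$ also satisfies this property: for every positive integer $t$, $\chi(L(mH))\geq t$ implies that $L(mH)$ has a $K_t$-immersion.
   Context: Graphs are finite and may have parallel edges but no loops. $\chi$ denotes the chromatic number. The line graph $L(H)$ of a graph $H$ is the simple graph whose vertex set is $E(H)$, in which two distinct edges of $H$ are adjacent iff they share at least one endpoint. For $m\geq 2$, $mH$ denotes the graph obtained from $H$ by replacing each edge $e$ by $m$ parallel copies of $e$. A graph $G$ has a $K_t$-immersion if there is an injective map $\phi$ from the vertex set of $K_t$ to $V(G)$ and, for each pair $u\neq v$ of vertices of $K_t$, a path in $G$ joining $\phi(u)$ and $\phi(v)$, such that these paths are pairwise edge-disjoint. *)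

theory Defs
  imports Main
begin

definition multigraph :: "'v set \<Rightarrow> 'e set \<Rightarrow> ('e \<Rightarrow> 'v set) \<Rightarrow> bool" where
  "multigraph V E ends \<longleftrightarrow> finite V \<and> finite E \<and>
     (\<forall>e\<in>E. ends e \<subseteq> V \<and> card (ends e) = 2)"

definition line_adj :: "('e \<Rightarrow> 'v set) \<Rightarrow> 'e \<Rightarrow> 'e \<Rightarrow> bool" where
  "line_adj ends e f \<longleftrightarrow> e \<noteq> f \<and> ends e \<inter> ends f \<noteq> {}"

text \<open>mH: each edge e replaced by m parallel copies (e,0),...,(e,m-1).\<close>
definition mult_edges :: "nat \<Rightarrow> 'e set \<Rightarrow> ('e \<times> nat) set" where
  "mult_edges m E = E \<times> {0..<m}"

definition mult_ends :: "('e \<Rightarrow> 'v set) \<Rightarrow> ('e \<times> nat) \<Rightarrow> 'v set" where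
  "mult_ends ends = (\<lambda>(e, i). ends e)"

text \<open>Simple graphs are given by a vertex set W and a (symmetric, irreflexive) adjacency.\<close>
definition proper_colouring :: "'a set \<Rightarrow> ('a \<Rightarrow> 'a \<Rightarrow> bool) \<Rightarrow> nat \<Rightarrow> ('a \<Rightarrow> nat) \<Rightarrow> bool" where
  "proper_colouring W adj k c \<longleftrightarrow> (\<forall>v\<in>W. c v < k) \<and> (\<forall>u\<in>W. \<forall>v\<in>W. adj u v \<longrightarrow> c u \<noteq> c v)"

definition chromatic_number :: "'a set \<Rightarrow> ('a \<Rightarrow> 'a \<Rightarrow> bool) \<Rightarrow> nat" where
  "chromatic_number W adj = (LEAST k. \<exists>c. proper_colouring W adj k c)"

definition is_path :: "'a set \<Rightarrow> ('a \<Rightarrow> 'a \<Rightarrow> bool) \<Rightarrow> 'a list \<Rightarrow> bool" where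
  "is_path W adj xs \<longleftrightarrow> xs \<noteq> [] \<and> distinct xs \<and> set xs \<subseteq> W \<and>
     (\<forall>k. Suc k < length xs \<longrightarrow> adj (xs ! k) (xs ! Suc k))"

definition path_edges :: "'a list \<Rightarrow> 'a set set" where
  "path_edges xs = {{xs ! k, xs ! Suc k} | k. Suc k < length xs}"

definition has_K_immersion :: "'a set \<Rightarrow> ('a \<Rightarrow> 'a \<Rightarrow> bool) \<Rightarrow> nat \<Rightarrow> bool" where
  "has_K_immersion W adj t \<longleftrightarrow> (\<exists>(\<phi>::nat \<Rightarrow> 'a) (P::nat \<Rightarrow> nat \<Rightarrow> 'a list).
     inj_on \<phi> {0..<t} \<and> \<phi> ` {0..<t} \<subseteq> W \<and>
     (\<forall>i j. i < j \<and> j < t \<longrightarrow>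
        is_path W adj (P i j) \<and> hd (P i j) = \<phi> i \<and> last (P i j) = \<phi> j) \<and>
     (\<forall>i j i' j'. i < j \<and> j < t \<and> i' < j' \<and> j' < t \<and> (i, j) \<noteq> (i', j') \<longrightarrow>
        path_edges (P i j) \<inter> path_edges (P i' j') = {}))"

definition AKL_property :: "'a set \<Rightarrow> ('a \<Rightarrow> 'a \<Rightarrow> bool) \<Rightarrow> bool" where
  "AKL_property W adj \<longleftrightarrow> (\<forall>t::nat. t \<ge> 1 \<longrightarrow> chromatic_number W adj \<ge> t \<longrightarrow> has_K_immersion W adj t)"

end

theory Submission
  imports Defs "HOL-Number_Theory.Cong"
begin

text \<open>Colouring the copy (e, i) of an edge e by c(e) m + i shows
  \<open>\<chi>(L(mH)) \<le> m s\<close> for \<open>s = \<chi>(L(H))\<close>. Conversely an immersion of \<open>K\<^sub>s\<close> in L(H)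
  blows up to an immersion of \<open>K\<^sub>m\<^sub>s\<close> in L(mH): each branch vertex e becomes its
  m copies, copies of the same edge are joined directly, and every path joining two
  branch vertices is lifted in \<open>m\<^sup>2\<close> edge-disjoint ways, one for each pair of copies,
  by labelling its vertices with copy indices so that any two consecutive labels
  determine the pair. So \<open>\<chi>(L(mH)) \<ge> t\<close> forces \<open>t \<le> m s\<close>, and \<open>K\<^sub>t\<close> immerses
  into the blown-up \<open>K\<^sub>m\<^sub>s\<close>.\<close>

lemma add_mod_right_cancel_less:
  fixes i i' j m :: nat
  assumes "i < m" "i' < m" "(i + j) mod m = (i' + j) mod m"
  shows "i = i'"
  using assms cong_add_rcancel_nat cong_less_modulus_unique_nat unfolding cong_def by blast

definition K_immersion ::
    "'a set \<Rightarrow> ('a \<Rightarrow> 'a \<Rightarrow> bool) \<Rightarrow> nat \<Rightarrow> (nat \<Rightarrow> 'a) \<Rightarrow> (nat \<Rightarrow> nat \<Rightarrow> 'a list) \<Rightarrow> bool" where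
  "K_immersion W adj t \<phi> P \<longleftrightarrow>
     inj_on \<phi> {0..<t} \<and> \<phi> ` {0..<t} \<subseteq> W \<and>
     (\<forall>i j. i < j \<and> j < t \<longrightarrow>
        is_path W adj (P i j) \<and> hd (P i j) = \<phi> i \<and> last (P i j) = \<phi> j) \<and>
     (\<forall>i j i' j'. i < j \<and> j < t \<and> i' < j' \<and> j' < t \<and> (i, j) \<noteq> (i', j') \<longrightarrow>
        path_edges (P i j) \<inter> path_edges (P i' j') = {})"

lemma has_K_immersion_iff: "has_K_immersion W adj t \<longleftrightarrow> (\<exists>\<phi> P. K_immersion W adj t \<phi> P)"
  unfolding has_K_immersion_def K_immersion_def by blast

lemma K_immersion_mono: "K_immersion W adj t \<phi> P \<Longrightarrow> t' \<le> t \<Longrightarrow> K_immersion W adj t' \<phi> P"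
  unfolding K_immersion_def by (auto intro: inj_on_subset)

lemma has_K_immersion_mono: "has_K_immersion W adj t \<Longrightarrow> t' \<le> t \<Longrightarrow> has_K_immersion W adj t'"
  using K_immersion_mono unfolding has_K_immersion_iff by blast

lemma K_immersion_path:
  assumes "K_immersion W adj t \<phi> P" "i < j" "j < t"
  shows "is_path W adj (P i j)" "hd (P i j) = \<phi> i" "last (P i j) = \<phi> j"
    and "Suc 0 < length (P i j)"
proof -
  show path: "is_path W adj (P i j)" and hd: "hd (P i j) = \<phi> i" and last: "last (P i j) = \<phi> j"
    using assms unfolding K_immersion_def by auto
  have "\<phi> i \<noteq> \<phi> j"
    using assms unfolding K_immersion_def by (auto dest: inj_onD)
  then show "Suc 0 < length (P i j)"
    using path hd last by (cases "P i j") (auto simp: is_path_def)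
qed

lemma path_edges_doubleton: "path_edges [x, y] = {{x, y}}"
  unfolding path_edges_def by auto

lemma chromatic_number_le: "proper_colouring W adj k c \<Longrightarrow> chromatic_number W adj \<le> k"
  unfolding chromatic_number_def by (rule Least_le) blast

lemma proper_colouring_chromatic_number:
  assumes "finite W" "\<And>v. \<not> adj v v"
  obtains c where "proper_colouring W adj (chromatic_number W adj) c"
proof -
  obtain h where "bij_betw h W {0..<card W}"
    using ex_bij_betw_finite_nat[OF assms(1)] by blast
  then have "proper_colouring W adj (card W) h"
    using assms(2) unfolding proper_colouring_def bij_betw_def inj_on_def by auto
  then have "\<exists>c. proper_colouring W adj (card W) c" by blast
  then have "\<exists>c. proper_colouring W adj (chromatic_number W adj) c"
    unfolding chromatic_number_def by (rule LeastI)
  then show thesis using that by blast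
qed

lemma line_adj_mult_ends:
  "line_adj (mult_ends ends) (e, i) (f, j) \<longleftrightarrow>
     (if e = f then i \<noteq> j \<and> ends e \<noteq> {} else line_adj ends e f)"
  by (auto simp: line_adj_def mult_ends_def)

lemma line_adj_mult_endsI: "line_adj ends e f \<Longrightarrow> line_adj (mult_ends ends) (e, i) (f, j)"
  by (auto simp: line_adj_def mult_ends_def)

lemma chromatic_number_mult_le:
  assumes "finite E"
  shows "chromatic_number (mult_edges m E) (line_adj (mult_ends ends))
           \<le> m * chromatic_number E (line_adj ends)"
proof -
  define s where "s = chromatic_number E (line_adj ends)"
  obtain c where c: "proper_colouring E (line_adj ends) s c"
    using proper_colouring_chromatic_number[OF assms, of "line_adj ends"]
    unfolding s_def line_adj_def by blast
  define c' where "c' = (\<lambda>(e, i). c e * m + i)"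
  have "proper_colouring (mult_edges m E) (line_adj (mult_ends ends)) (m * s) c'"
    unfolding proper_colouring_def
  proof (intro conjI ballI impI)
    fix v assume "v \<in> mult_edges m E"
    then obtain e i where v: "v = (e, i)" "e \<in> E" "i < m" by (auto simp: mult_edges_def)
    have "Suc (c e) * m \<le> s * m"
      using c v(2) unfolding proper_colouring_def by (intro mult_right_mono) auto
    then show "c' v < m * s" using v by (simp add: c'_def algebra_simps)
  next
    fix u v assume "u \<in> mult_edges m E" "v \<in> mult_edges m E"
      and adj: "line_adj (mult_ends ends) u v"
    then obtain e i f j where uv: "u = (e, i)" "v = (f, j)" "e \<in> E" "f \<in> E" "i < m" "j < m"
      by (auto simp: mult_edges_def)
    show "c' u \<noteq> c' v"
    proof
      assume "c' u = c' v"
      then have eq: "c e * m + i = c f * m + j" using uv by (simp add: c'_def)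
      have "c e = c f"
        using arg_cong[OF eq, of "\<lambda>n. n div m"] uv(5,6) by simp
      moreover from eq this have "i = j" by simp
      ultimately show False
        using adj c uv by (auto simp: line_adj_mult_ends proper_colouring_def split: if_splits)
    qed
  qed
  then show ?thesis unfolding s_def by (rule chromatic_number_le)
qed

text \<open>Labels i, j, i, j, \<dots>, j of a path with k + 1 vertices; when k is even the label
  before the last one is (i + j) mod m instead of i. Then the labels of any two
  consecutive vertices determine (i, j).\<close>
definition lift_label :: "nat \<Rightarrow> nat \<Rightarrow> nat \<Rightarrow> nat \<Rightarrow> nat \<Rightarrow> nat" where
  "lift_label m k i j l =
     (if l = k then j else if even k \<and> Suc l = k then (i + j) mod m else if even l then i else j)"

lemma lift_label_less: "i < m \<Longrightarrow> j < m \<Longrightarrow> lift_label m k i j l < m"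
  by (auto simp: lift_label_def)

lemma lift_label_inj:
  assumes "l < k" "i < m" "j < m" "i' < m" "j' < m"
    and "lift_label m k i j l = lift_label m k i' j' l"
    and "lift_label m k i j (Suc l) = lift_label m k i' j' (Suc l)"
  shows "i = i' \<and> j = j'"
proof -
  consider "Suc l = k" "even k" | "Suc l = k" "odd k" | "Suc (Suc l) = k" "even k"
    | "Suc l \<noteq> k" "Suc (Suc l) = k \<longrightarrow> odd k"
    by blast
  then show ?thesis
  proof cases
    case 1
    then have "j = j'" "(i + j) mod m = (i' + j) mod m"
      using assms(6,7) by (simp_all add: lift_label_def)
    then show ?thesis using add_mod_right_cancel_less assms(2,4) by blast
  next
    case 2
    then have "even l" by (metis even_Suc)
    with 2 show ?thesis using assms(6,7) by (simp add: lift_label_def)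
  next
    case 3
    then have "i = i'" "(i + j) mod m = (i + j') mod m"
      using assms(6,7) by (auto simp: lift_label_def)
    then show ?thesis using add_mod_right_cancel_less[of j m j' i] assms(3,5) by (simp add: add.commute)
  next
    case 4
    then show ?thesis using assms(1,6,7) by (auto simp: lift_label_def split: if_splits)
  qed
qed

definition lift_path :: "nat \<Rightarrow> 'e list \<Rightarrow> nat \<Rightarrow> nat \<Rightarrow> ('e \<times> nat) list" where
  "lift_path m Q i j = map (\<lambda>l. (Q ! l, lift_label m (length Q - 1) i j l)) [0..<length Q]"

lemma length_lift_path [simp]: "length (lift_path m Q i j) = length Q"
  by (simp add: lift_path_def)

lemma nth_lift_path [simp]:
  "l < length Q \<Longrightarrow> lift_path m Q i j ! l = (Q ! l, lift_label m (length Q - 1) i j l)"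
  by (simp add: lift_path_def)

lemma lift_path_eq_Nil_iff [simp]: "lift_path m Q i j = [] \<longleftrightarrow> Q = []"
  by (simp add: lift_path_def)

lemma hd_lift_path: "Suc 0 < length Q \<Longrightarrow> hd (lift_path m Q i j) = (hd Q, i)"
  by (cases Q) (auto simp: hd_conv_nth lift_label_def)

lemma last_lift_path: "Suc 0 < length Q \<Longrightarrow> last (lift_path m Q i j) = (last Q, j)"
  by (cases Q) (auto simp: last_conv_nth lift_label_def)

lemma path_edges_lift_path:
  "path_edges (lift_path m Q i j) =
     {{(Q ! l, lift_label m (length Q - 1) i j l), (Q ! Suc l, lift_label m (length Q - 1) i j (Suc l))}
      | l. Suc l < length Q}"
  unfolding path_edges_def by (force simp: Suc_lessD)

lemma is_path_lift_path:
  assumes "is_path E (line_adj ends) Q" "i < m" "j < m"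
  shows "is_path (mult_edges m E) (line_adj (mult_ends ends)) (lift_path m Q i j)"
proof -
  have Q: "distinct Q" "Q \<noteq> []" "set Q \<subseteq> E"
    and adj: "\<And>l. Suc l < length Q \<Longrightarrow> line_adj ends (Q ! l) (Q ! Suc l)"
    using assms(1) by (auto simp: is_path_def)
  have "distinct (lift_path m Q i j)"
    using Q(1) by (simp add: lift_path_def distinct_map inj_on_def nth_eq_iff_index_eq)
  moreover have "set (lift_path m Q i j) \<subseteq> mult_edges m E"
    using Q(3) assms(2,3) by (auto simp: lift_path_def mult_edges_def lift_label_less)
  moreover have "line_adj (mult_ends ends) (lift_path m Q i j ! l) (lift_path m Q i j ! Suc l)"
    if "Suc l < length (lift_path m Q i j)" for l
    using adj[of l] that by (simp add: line_adj_mult_endsI)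
  ultimately show ?thesis using Q(2) unfolding is_path_def by simp
qed

lemma fst_path_edge_lift_path:
  assumes "distinct Q" "e \<in> path_edges (lift_path m Q i j)"
  shows "fst ` e \<in> path_edges Q" "\<exists>x\<in>e. \<exists>y\<in>e. fst x \<noteq> fst y"
proof -
  from assms(2) obtain l where l: "Suc l < length Q"
    "e = {(Q ! l, lift_label m (length Q - 1) i j l),
          (Q ! Suc l, lift_label m (length Q - 1) i j (Suc l))}"
    unfolding path_edges_lift_path by blast
  then show "fst ` e \<in> path_edges Q" unfolding path_edges_def by auto
  have "Q ! l \<noteq> Q ! Suc l" using assms(1) l(1) by (simp add: nth_eq_iff_index_eq)
  then show "\<exists>x\<in>e. \<exists>y\<in>e. fst x \<noteq> fst y" using l(2) by auto
qed

lemma lift_path_edges_disjoint: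
  assumes "distinct Q" "i < m" "j < m" "i' < m" "j' < m" "(i, j) \<noteq> (i', j')"
  shows "path_edges (lift_path m Q i j) \<inter> path_edges (lift_path m Q i' j') = {}"
proof (rule ccontr)
  let ?lab = "lift_label m (length Q - 1)"
  assume "path_edges (lift_path m Q i j) \<inter> path_edges (lift_path m Q i' j') \<noteq> {}"
  then obtain e where "e \<in> path_edges (lift_path m Q i j)" "e \<in> path_edges (lift_path m Q i' j')"
    by blast
  then obtain l l' where l: "Suc l < length Q" "Suc l' < length Q"
    and "e = {(Q ! l, ?lab i j l), (Q ! Suc l, ?lab i j (Suc l))}"
    and "e = {(Q ! l', ?lab i' j' l'), (Q ! Suc l', ?lab i' j' (Suc l'))}"
    unfolding path_edges_lift_path by auto
  then have eq: "{(Q ! l, ?lab i j l), (Q ! Suc l, ?lab i j (Suc l))}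
           = {(Q ! l', ?lab i' j' l'), (Q ! Suc l', ?lab i' j' (Suc l'))}"
    by simp
  have Q_inj: "Q ! a = Q ! b \<longleftrightarrow> a = b" if "a < length Q" "b < length Q" for a b
    using assms(1) that by (simp add: nth_eq_iff_index_eq)
  have fst_eq: "{Q ! l, Q ! Suc l} = {Q ! l', Q ! Suc l'}"
    using arg_cong[OF eq, of "image fst"] by simp
  show False
  proof (cases "l = l'")
    case True
    have "l < length Q - 1" using l(1) by simp
    moreover have "?lab i j l = ?lab i' j' l" "?lab i j (Suc l) = ?lab i' j' (Suc l)"
      using eq True Q_inj[of l "Suc l"] l(1) by (auto simp: doubleton_eq_iff)
    ultimately have "i = i' \<and> j = j'" using lift_label_inj assms(2-5) by blast
    with assms(6) show False by simp
  next
    case False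
    then have "Q ! l = Q ! Suc l'" "Q ! Suc l = Q ! l'"
      using fst_eq Q_inj[of l l'] l by (auto simp: doubleton_eq_iff)
    then have "l = Suc l'" "Suc l = l'" using l Q_inj[of l "Suc l'"] Q_inj[of "Suc l" l'] by auto
    then show False by simp
  qed
qed

lemma div_less_of_less_mult: "(n::nat) < m * s \<Longrightarrow> n div m < s"
  by (simp add: less_mult_imp_div_less mult.commute)

lemma div_less_div_of_less: "(n::nat) < n' \<Longrightarrow> n div m \<noteq> n' div m \<Longrightarrow> n div m < n' div m"
  using div_le_mono[of n n' m] by simp

definition blowup_branch :: "nat \<Rightarrow> (nat \<Rightarrow> 'e) \<Rightarrow> nat \<Rightarrow> 'e \<times> nat" where
  "blowup_branch m \<phi> n = (\<phi> (n div m), n mod m)"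

definition blowup_path ::
    "nat \<Rightarrow> (nat \<Rightarrow> 'e) \<Rightarrow> (nat \<Rightarrow> nat \<Rightarrow> 'e list) \<Rightarrow> nat \<Rightarrow> nat \<Rightarrow> ('e \<times> nat) list" where
  "blowup_path m \<phi> P n n' =
     (if n div m = n' div m then [blowup_branch m \<phi> n, blowup_branch m \<phi> n']
      else lift_path m (P (n div m) (n' div m)) (n mod m) (n' mod m))"

context
  fixes E :: "'e set" and ends :: "'e \<Rightarrow> 'v set" and s m :: nat
    and \<phi> :: "nat \<Rightarrow> 'e" and P :: "nat \<Rightarrow> nat \<Rightarrow> 'e list"
  assumes immersion: "K_immersion E (line_adj ends) s \<phi> P"
    and ends_nonempty: "\<forall>e\<in>E. ends e \<noteq> {}"
    and m_pos: "0 < m"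
begin

lemma blowup_branch_mem: "n < m * s \<Longrightarrow> blowup_branch m \<phi> n \<in> mult_edges m E"
  using immersion div_less_of_less_mult m_pos
  by (auto simp: blowup_branch_def mult_edges_def K_immersion_def)

lemma inj_on_blowup_branch: "inj_on (blowup_branch m \<phi>) {0..<m * s}"
proof (rule inj_onI)
  fix n n' assume n: "n \<in> {0..<m * s}" "n' \<in> {0..<m * s}"
    and eq: "blowup_branch m \<phi> n = blowup_branch m \<phi> n'"
  then have "\<phi> (n div m) = \<phi> (n' div m)" "n mod m = n' mod m"
    by (simp_all add: blowup_branch_def)
  moreover have "inj_on \<phi> {0..<s}" using immersion by (simp add: K_immersion_def)
  ultimately have "n div m = n' div m"
    using n div_less_of_less_mult by (auto dest: inj_onD)
  with \<open>n mod m = n' mod m\<close> show "n = n'" by (metis div_mult_mod_eq)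
qed

lemma blowup_path_is_path:
  assumes "n < n'" "n' < m * s"
  shows "is_path (mult_edges m E) (line_adj (mult_ends ends)) (blowup_path m \<phi> P n n') \<and>
    hd (blowup_path m \<phi> P n n') = blowup_branch m \<phi> n \<and>
    last (blowup_path m \<phi> P n n') = blowup_branch m \<phi> n'"
proof (cases "n div m = n' div m")
  case True
  have ne: "blowup_branch m \<phi> n \<noteq> blowup_branch m \<phi> n'"
    using assms inj_on_blowup_branch by (auto dest: inj_onD)
  moreover have "\<phi> (n div m) \<in> E"
    using immersion assms div_less_of_less_mult by (auto simp: K_immersion_def)
  ultimately have "line_adj (mult_ends ends) (blowup_branch m \<phi> n) (blowup_branch m \<phi> n')"
    using True ends_nonempty by (simp add: blowup_branch_def line_adj_mult_ends)
  then show ?thesis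
    using True assms ne blowup_branch_mem
    by (auto simp: blowup_path_def is_path_def less_Suc_eq)
next
  case False
  then have a: "n div m < n' div m" "n' div m < s"
    using assms div_less_div_of_less div_less_of_less_mult by auto
  then show ?thesis
    using False K_immersion_path[OF immersion a] m_pos
    by (simp add: blowup_path_def is_path_lift_path hd_lift_path last_lift_path blowup_branch_def)
qed

lemma blowup_path_edge_within_copies_iff:
  assumes "n < n'" "n' < m * s" "e \<in> path_edges (blowup_path m \<phi> P n n')"
  shows "(\<forall>x\<in>e. \<forall>y\<in>e. fst x = fst y) \<longleftrightarrow> n div m = n' div m"
proof (cases "n div m = n' div m")
  case True
  then show ?thesis using assms(3)
    by (simp add: blowup_path_def path_edges_doubleton blowup_branch_def)
next
  case False
  then have "n div m < n' div m" "n' div m < s"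
    using assms div_less_div_of_less div_less_of_less_mult by auto
  then have "distinct (P (n div m) (n' div m))"
    using K_immersion_path(1)[OF immersion] by (simp add: is_path_def)
  then show ?thesis
    using False assms(3) fst_path_edge_lift_path(2) by (fastforce simp: blowup_path_def)
qed

lemma blowup_paths_edge_disjoint:
  assumes n: "n1 < n2" "n2 < m * s" "n3 < n4" "n4 < m * s" "(n1, n2) \<noteq> (n3, n4)"
  shows "path_edges (blowup_path m \<phi> P n1 n2) \<inter> path_edges (blowup_path m \<phi> P n3 n4) = {}"
proof (rule ccontr)
  assume "path_edges (blowup_path m \<phi> P n1 n2) \<inter> path_edges (blowup_path m \<phi> P n3 n4) \<noteq> {}"
  then obtain e where e12: "e \<in> path_edges (blowup_path m \<phi> P n1 n2)"
    and e34: "e \<in> path_edges (blowup_path m \<phi> P n3 n4)"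
    by blast
  have same_copies: "n1 div m = n2 div m \<longleftrightarrow> n3 div m = n4 div m"
    using blowup_path_edge_within_copies_iff[OF n(1,2) e12]
      blowup_path_edge_within_copies_iff[OF n(3,4) e34] by simp
  show False
  proof (cases "n1 div m = n2 div m")
    case True
    then have "{blowup_branch m \<phi> n1, blowup_branch m \<phi> n2} = {blowup_branch m \<phi> n3, blowup_branch m \<phi> n4}"
      using e12 e34 same_copies by (simp add: blowup_path_def path_edges_doubleton)
    then have "(n1 = n3 \<and> n2 = n4) \<or> (n1 = n4 \<and> n2 = n3)"
      using inj_on_blowup_branch n by (auto simp: doubleton_eq_iff dest: inj_onD)
    then show False using n by auto
  next
    case False
    let ?Q12 = "P (n1 div m) (n2 div m)" and ?Q34 = "P (n3 div m) (n4 div m)"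
    have a: "n1 div m < n2 div m" "n2 div m < s" "n3 div m < n4 div m" "n4 div m < s"
      using n False same_copies div_less_div_of_less div_less_of_less_mult by auto
    have lifts: "e \<in> path_edges (lift_path m ?Q12 (n1 mod m) (n2 mod m))"
      "e \<in> path_edges (lift_path m ?Q34 (n3 mod m) (n4 mod m))"
      using e12 e34 False same_copies by (simp_all add: blowup_path_def)
    have distinct: "distinct ?Q12" "distinct ?Q34"
      using K_immersion_path(1)[OF immersion] a by (auto simp: is_path_def)
    show False
    proof (cases "(n1 div m, n2 div m) = (n3 div m, n4 div m)")
      case True
      then have div_eq: "n1 div m = n3 div m" "n2 div m = n4 div m" by simp_all
      have "(n1 mod m, n2 mod m) = (n3 mod m, n4 mod m)"
      proof (rule ccontr)
        assume "(n1 mod m, n2 mod m) \<noteq> (n3 mod m, n4 mod m)"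
        then have "path_edges (lift_path m ?Q12 (n1 mod m) (n2 mod m))
            \<inter> path_edges (lift_path m ?Q12 (n3 mod m) (n4 mod m)) = {}"
          using lift_path_edges_disjoint[OF distinct(1)] m_pos by simp
        then show False using lifts div_eq by auto
      qed
      then have "n1 mod m = n3 mod m" "n2 mod m = n4 mod m" by simp_all
      then have "n1 = n3" "n2 = n4" using div_eq by (metis div_mult_mod_eq)+
      then show False using n(5) by simp
    next
      case False
      then have "path_edges ?Q12 \<inter> path_edges ?Q34 = {}"
        using immersion a unfolding K_immersion_def by blast
      then show False using lifts distinct fst_path_edge_lift_path(1) by blast
    qed
  qed
qed

lemma K_immersion_blowup:
  "K_immersion (mult_edges m E) (line_adj (mult_ends ends)) (m * s) (blowup_branch m \<phi>) (blowup_path m \<phi> P)"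
  unfolding K_immersion_def
proof (intro conjI)
  show "blowup_branch m \<phi> ` {0..<m * s} \<subseteq> mult_edges m E"
    using blowup_branch_mem by auto
  show "\<forall>n n'. n < n' \<and> n' < m * s \<longrightarrow>
      is_path (mult_edges m E) (line_adj (mult_ends ends)) (blowup_path m \<phi> P n n') \<and>
      hd (blowup_path m \<phi> P n n') = blowup_branch m \<phi> n \<and>
      last (blowup_path m \<phi> P n n') = blowup_branch m \<phi> n'"
    using blowup_path_is_path by blast
  show "\<forall>n1 n2 n3 n4. n1 < n2 \<and> n2 < m * s \<and> n3 < n4 \<and> n4 < m * s \<and> (n1, n2) \<noteq> (n3, n4) \<longrightarrow>
      path_edges (blowup_path m \<phi> P n1 n2) \<inter> path_edges (blowup_path m \<phi> P n3 n4) = {}"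
    using blowup_paths_edge_disjoint by blast
qed (rule inj_on_blowup_branch)

end

theorem corollary1p3:
  fixes V :: "'v set" and E :: "'e set" and ends :: "'e \<Rightarrow> 'v set" and m :: nat
  assumes "multigraph V E ends"
    and "AKL_property E (line_adj ends)"
    and "m \<ge> 2"
  shows "AKL_property (mult_edges m E) (line_adj (mult_ends ends))"
  unfolding AKL_property_def
proof (intro allI impI)
  fix t :: nat
  assume "t \<ge> 1" and "chromatic_number (mult_edges m E) (line_adj (mult_ends ends)) \<ge> t"
  define s where "s = chromatic_number E (line_adj ends)"
  have "finite E" and ends_nonempty: "\<forall>e\<in>E. ends e \<noteq> {}"
    using assms(1) unfolding multigraph_def by (auto simp: card_eq_0_iff[symmetric])
  then have "t \<le> m * s"
    using \<open>chromatic_number _ _ \<ge> t\<close> chromatic_number_mult_le[of E m ends] unfolding s_def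
    by linarith
  then have "s \<ge> 1" using \<open>t \<ge> 1\<close> by (cases s) auto
  then obtain \<phi> P where "K_immersion E (line_adj ends) s \<phi> P"
    using assms(2) unfolding AKL_property_def s_def has_K_immersion_iff by blast
  moreover have "0 < m" using assms(3) by simp
  ultimately have "has_K_immersion (mult_edges m E) (line_adj (mult_ends ends)) (m * s)"
    using K_immersion_blowup ends_nonempty unfolding has_K_immersion_iff by blast
  then show "has_K_immersion (mult_edges m E) (line_adj (mult_ends ends)) t"
    using \<open>t \<le> m * s\<close> by (rule has_K_immersion_mono)
qed

end
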